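(* Let $a\in K$ be such that $K$ is finite-dimensional as a right vector space over $C(a)=\{b\in K^*:{}^{b}a=a\}\cup\{0\}$. Then a skew rational function with minimal representation $P(T)^{-1}Q(T)$ is defined at $a$ if and only if $P(c)\neq0$ for all $c\in\Delta(a)$.
   Context: Let $K$ be a skew field, $K^*=K\setminus\{0\}$, $\sigma\colon K\to K$ a ring endomorphism and $\delta\colon K\to K$ a $\sigma$-derivation. $K[T;\sigma,\delta]$ is the skew polynomial ring with $Ta=\sigma(a)T+\delta(a)$. The $(\sigma,\delta)$-action of $K^*$ on $K$ is ${}^{b}a=\sigma(b)ab^{-1}+\delta(b)b^{-1}$; $\Delta(a)=\{{}^{b}a:b\in K^*\}$. $C(a)$ is a skew subfield of $K$. For $P\in K[T;\sigma,\delta]$ and $a\in K$, $P(a)$ is the unique element of $K$ with $P(T)-P(a)\in K[T;\sigma,\delta](T-a)$. For a set $Z$ with a $K^*$-action, the skew product of functions $Z\to K$ is $(f\diamond g)(z)=f({}^{g(z)}z)g(z)$ if $g(z)\neq0$, $0$ otherwise; $f$ is skew invertible if some $g$ satisfies $f\diamond g=g\diamond f=1$. $K(T;\sigma,\delta)$ is the division ring of left fractions of $K[T;\sigma,\delta]$; each $f$ has a unique minimal representation $P(T)^{-1}Q(T)$ with $P$ monic of least degree; $f$ is defined at $a$ if the function $\Delta(a)\to K$, $c\mapsto P(c)$, is skew invertible. *)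

theory Defs
  imports "HOL-Computational_Algebra.Polynomial"
begin

text \<open>Skew polynomials over a skew field 'a (class division_ring) are represented by
the type 'a poly of finitely supported coefficient sequences, P = sum_i p_i T^i with
coefficients written on the left. Multiplication is the skew multiplication determined by
T a = sigma(a) T + delta(a); it is defined below and NOT the commutative poly product.\<close>

definition ring_endo :: "('a::division_ring \<Rightarrow> 'a) \<Rightarrow> bool" where
  "ring_endo \<sigma> \<longleftrightarrow> \<sigma> 1 = 1 \<and> (\<forall>x y. \<sigma> (x + y) = \<sigma> x + \<sigma> y) \<and> (\<forall>x y. \<sigma> (x * y) = \<sigma> x * \<sigma> y)"

definition sigma_derivation :: "('a::division_ring \<Rightarrow> 'a) \<Rightarrow> ('a \<Rightarrow> 'a) \<Rightarrow> bool" where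
  "sigma_derivation \<sigma> \<delta> \<longleftrightarrow> (\<forall>x y. \<delta> (x + y) = \<delta> x + \<delta> y) \<and>
     (\<forall>x y. \<delta> (x * y) = \<sigma> x * \<delta> y + \<delta> x * y)"

text \<open>T^n * b, as a skew polynomial.\<close>
primrec Tpow_times :: "('a::division_ring \<Rightarrow> 'a) \<Rightarrow> ('a \<Rightarrow> 'a) \<Rightarrow> nat \<Rightarrow> 'a \<Rightarrow> 'a poly" where
  "Tpow_times \<sigma> \<delta> 0 b = [:b:]"
| "Tpow_times \<sigma> \<delta> (Suc n) b =
     (let q = Tpow_times \<sigma> \<delta> n b in
      (\<Sum>k\<le>degree q. monom (\<sigma> (coeff q k)) (Suc k) + monom (\<delta> (coeff q k)) k))"

text \<open>(a T^i) * (b T^j)\<close>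
definition mono_mult :: "('a::division_ring \<Rightarrow> 'a) \<Rightarrow> ('a \<Rightarrow> 'a) \<Rightarrow> 'a \<Rightarrow> nat \<Rightarrow> 'a \<Rightarrow> nat \<Rightarrow> 'a poly" where
  "mono_mult \<sigma> \<delta> a i b j =
     (let c = Tpow_times \<sigma> \<delta> i b in (\<Sum>k\<le>degree c. monom (a * coeff c k) (k + j)))"

definition skmult :: "('a::division_ring \<Rightarrow> 'a) \<Rightarrow> ('a \<Rightarrow> 'a) \<Rightarrow> 'a poly \<Rightarrow> 'a poly \<Rightarrow> 'a poly" where
  "skmult \<sigma> \<delta> p q = (\<Sum>i\<le>degree p. \<Sum>j\<le>degree q. mono_mult \<sigma> \<delta> (coeff p i) i (coeff q j) j)"

definition skeval :: "('a::division_ring \<Rightarrow> 'a) \<Rightarrow> ('a \<Rightarrow> 'a) \<Rightarrow> 'a poly \<Rightarrow> 'a \<Rightarrow> 'a" where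
  "skeval \<sigma> \<delta> P a = (THE r. \<exists>Q. P - [:r:] = skmult \<sigma> \<delta> Q [:- a, 1:])"

definition sd_act :: "('a::division_ring \<Rightarrow> 'a) \<Rightarrow> ('a \<Rightarrow> 'a) \<Rightarrow> 'a \<Rightarrow> 'a \<Rightarrow> 'a" where
  "sd_act \<sigma> \<delta> b a = \<sigma> b * a * inverse b + \<delta> b * inverse b"

definition conj_class :: "('a::division_ring \<Rightarrow> 'a) \<Rightarrow> ('a \<Rightarrow> 'a) \<Rightarrow> 'a \<Rightarrow> 'a set" where
  "conj_class \<sigma> \<delta> a = {sd_act \<sigma> \<delta> b a | b. b \<noteq> 0}"

definition centralizer :: "('a::division_ring \<Rightarrow> 'a) \<Rightarrow> ('a \<Rightarrow> 'a) \<Rightarrow> 'a \<Rightarrow> 'a set" where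
  "centralizer \<sigma> \<delta> a = {b. b \<noteq> 0 \<and> sd_act \<sigma> \<delta> b a = a} \<union> {0}"

definition fin_dim_right_over :: "'a::division_ring set \<Rightarrow> bool" where
  "fin_dim_right_over F \<longleftrightarrow> (\<exists>B. finite B \<and> (\<forall>x. \<exists>c. (\<forall>b\<in>B. c b \<in> F) \<and> x = (\<Sum>b\<in>B. b * c b)))"

definition skew_prod :: "('a::division_ring \<Rightarrow> 'a) \<Rightarrow> ('a \<Rightarrow> 'a) \<Rightarrow> ('a \<Rightarrow> 'a) \<Rightarrow> ('a \<Rightarrow> 'a) \<Rightarrow> 'a \<Rightarrow> 'a" where
  "skew_prod \<sigma> \<delta> f g z = (if g z \<noteq> 0 then f (sd_act \<sigma> \<delta> (g z) z) * g z else 0)"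

definition skew_invertible_on :: "('a::division_ring \<Rightarrow> 'a) \<Rightarrow> ('a \<Rightarrow> 'a) \<Rightarrow> 'a set \<Rightarrow> ('a \<Rightarrow> 'a) \<Rightarrow> bool" where
  "skew_invertible_on \<sigma> \<delta> Z f \<longleftrightarrow>
     (\<exists>g. \<forall>z\<in>Z. skew_prod \<sigma> \<delta> f g z = 1 \<and> skew_prod \<sigma> \<delta> g f z = 1)"

text \<open>Equality of left fractions P^{-1}Q = P'^{-1}Q' in K(T;sigma,delta).\<close>
definition same_fraction :: "('a::division_ring \<Rightarrow> 'a) \<Rightarrow> ('a \<Rightarrow> 'a) \<Rightarrow> 'a poly \<Rightarrow> 'a poly \<Rightarrow> 'a poly \<Rightarrow> 'a poly \<Rightarrow> bool" where
  "same_fraction \<sigma> \<delta> P Q P' Q' \<longleftrightarrow>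
     (\<exists>u u'. u \<noteq> 0 \<and> u' \<noteq> 0 \<and> skmult \<sigma> \<delta> u P = skmult \<sigma> \<delta> u' P' \<and> skmult \<sigma> \<delta> u Q = skmult \<sigma> \<delta> u' Q')"

definition minimal_rep :: "('a::division_ring \<Rightarrow> 'a) \<Rightarrow> ('a \<Rightarrow> 'a) \<Rightarrow> 'a poly \<Rightarrow> 'a poly \<Rightarrow> bool" where
  "minimal_rep \<sigma> \<delta> P Q \<longleftrightarrow> lead_coeff P = 1 \<and>
     (\<forall>P' Q'. P' \<noteq> 0 \<and> same_fraction \<sigma> \<delta> P Q P' Q' \<longrightarrow> degree P \<le> degree P')"

definition defined_at :: "('a::division_ring \<Rightarrow> 'a) \<Rightarrow> ('a \<Rightarrow> 'a) \<Rightarrow> 'a poly \<Rightarrow> 'a \<Rightarrow> bool" where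
  "defined_at \<sigma> \<delta> P a \<longleftrightarrow> skew_invertible_on \<sigma> \<delta> (conj_class \<sigma> \<delta> a) (\<lambda>c. skeval \<sigma> \<delta> P c)"

end

theory Submission imports Defs begin

text \<open>Write T_z x = \<sigma>(x) z + \<delta>(x). By the remainder theorem P(z) = P(T_z)(1), and conjugation
  gives P(^c a) c = P(T_a)(c) for c \<noteq> 0. The map P(T_a) is additive and right linear over C(a);
  if P has no zero on \<Delta>(a) it is injective, hence surjective because K is finite-dimensional
  over C(a). Solving P(T_z)(x) = 1 for each z \<in> \<Delta>(a) then yields the skew inverse of
  c \<mapsto> P(c); the converse is immediate from the definition of the skew product.\<close>

section \<open>Right vector spaces over a skew subfield\<close>

definition skew_subfield :: "'a::division_ring set \<Rightarrow> bool" where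
  "skew_subfield F \<longleftrightarrow> 0 \<in> F \<and> 1 \<in> F \<and> (\<forall>x\<in>F. \<forall>y\<in>F. x + y \<in> F \<and> x * y \<in> F) \<and>
     (\<forall>x\<in>F. - x \<in> F \<and> inverse x \<in> F)"

definition right_span :: "'a::division_ring set \<Rightarrow> ('b \<Rightarrow> 'a) \<Rightarrow> 'b set \<Rightarrow> 'a \<Rightarrow> bool" where
  "right_span F v I x \<longleftrightarrow> (\<exists>c. (\<forall>i\<in>I. c i \<in> F) \<and> x = (\<Sum>i\<in>I. v i * c i))"

definition right_independent :: "'a::division_ring set \<Rightarrow> ('b \<Rightarrow> 'a) \<Rightarrow> 'b set \<Rightarrow> bool" where
  "right_independent F w J \<longleftrightarrow>
     (\<forall>c. (\<forall>j\<in>J. c j \<in> F) \<and> (\<Sum>j\<in>J. w j * c j) = 0 \<longrightarrow> (\<forall>j\<in>J. c j = 0))"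

lemma skew_subfield_sum: "skew_subfield F \<Longrightarrow> (\<And>x. x \<in> A \<Longrightarrow> f x \<in> F) \<Longrightarrow> sum f A \<in> F"
  by (induction A rule: infinite_finite_induct) (auto simp: skew_subfield_def)

lemma not_right_independent_zero:
  assumes F: "skew_subfield F" and "finite J" "j0 \<in> J" "w j0 = 0"
  shows "\<not> right_independent F w J"
proof
  let ?c = "\<lambda>j. if j = j0 then (1::'a) else 0"
  assume "right_independent F w J"
  moreover have "(\<Sum>j\<in>J. w j * ?c j) = 0"
    using assms by (simp add: if_distrib cong: if_cong)
  moreover have "\<forall>j\<in>J. ?c j \<in> F" using F by (simp add: skew_subfield_def)
  ultimately show False
    using \<open>j0 \<in> J\<close> unfolding right_independent_def by fastforce
qed

lemma right_span_eliminate: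
  assumes F: "skew_subfield F" and "finite I" "i0 \<in> I"
    and c: "\<forall>i\<in>I. c i \<in> F" and d: "\<forall>i\<in>I. d i \<in> F" and "d i0 \<noteq> 0"
  shows "right_span F v (I - {i0})
           ((\<Sum>i\<in>I. v i * c i) - (\<Sum>i\<in>I. v i * d i) * (inverse (d i0) * c i0))"
proof -
  define t where "t = inverse (d i0) * c i0"
  define e where "e i = c i - d i * t" for i
  have split: "(\<Sum>i\<in>I. f i) = f i0 + (\<Sum>i\<in>I - {i0}. f i)" for f :: "_ \<Rightarrow> 'a"
    using assms(2,3) by (simp add: sum.remove)
  have dt: "d i0 * t = c i0"
    using \<open>d i0 \<noteq> 0\<close> by (simp add: t_def mult.assoc[symmetric])
  have "(\<Sum>i\<in>I. v i * c i) - (\<Sum>i\<in>I. v i * d i) * t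
      = (\<Sum>i\<in>I - {i0}. v i * c i) - (\<Sum>i\<in>I - {i0}. v i * d i) * t"
    by (simp add: split algebra_simps mult.assoc dt)
  also have "\<dots> = (\<Sum>i\<in>I - {i0}. v i * e i)"
    by (simp add: e_def sum_distrib_right sum_subtractf algebra_simps)
  finally have "(\<Sum>i\<in>I. v i * c i) - (\<Sum>i\<in>I. v i * d i) * t = (\<Sum>i\<in>I - {i0}. v i * e i)" .
  moreover have "t \<in> F" using F c d assms(3) by (simp add: t_def skew_subfield_def)
  then have "\<forall>i\<in>I - {i0}. e i \<in> F"
    using F c d unfolding e_def diff_conv_add_uminus skew_subfield_def by blast
  ultimately show ?thesis unfolding right_span_def t_def by blast
qed

lemma right_independent_eliminate:
  assumes F: "skew_subfield F" and "finite J" "j0 \<in> J" and t: "\<forall>j\<in>J. t j \<in> F"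
    and indep: "right_independent F w J"
  shows "right_independent F (\<lambda>j. w j - w j0 * t j) (J - {j0})"
  unfolding right_independent_def
proof (intro allI impI)
  fix d assume d: "(\<forall>j\<in>J - {j0}. d j \<in> F) \<and> (\<Sum>j\<in>J - {j0}. (w j - w j0 * t j) * d j) = 0"
  define S where "S = (\<Sum>k\<in>J - {j0}. t k * d k)"
  define c where "c j = (if j = j0 then - S else d j)" for j
  have "(\<Sum>j\<in>J. w j * c j) = w j0 * c j0 + (\<Sum>j\<in>J - {j0}. w j * d j)"
    using assms(2,3) by (simp add: sum.remove c_def)
  also have "\<dots> = (\<Sum>j\<in>J - {j0}. (w j - w j0 * t j) * d j)"
    by (simp add: c_def S_def algebra_simps sum_subtractf sum_distrib_left)
  finally have "(\<Sum>j\<in>J. w j * c j) = 0" using d by simp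
  moreover have "S \<in> F" unfolding S_def
    by (rule skew_subfield_sum[OF F]) (use F d t in \<open>auto simp: skew_subfield_def\<close>)
  then have "\<forall>j\<in>J. c j \<in> F" using F d by (auto simp: c_def skew_subfield_def)
  ultimately have "\<forall>j\<in>J. c j = 0" using indep unfolding right_independent_def by blast
  then show "\<forall>j\<in>J - {j0}. d j = 0" by (metis Diff_iff c_def singletonI)
qed

lemma right_independent_card_le:
  assumes F: "skew_subfield F"
  shows "finite I \<Longrightarrow> finite J \<Longrightarrow> \<forall>j\<in>J. right_span F v I (w j) \<Longrightarrow>
    right_independent F w J \<Longrightarrow> card J \<le> card I"
proof (induction "card I" arbitrary: I J w)
  case 0
  then have "I = {}" by simp
  with 0 have "\<forall>j\<in>J. w j = 0" by (simp add: right_span_def)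
  have "J = {}"
  proof (rule ccontr)
    assume "J \<noteq> {}"
    then obtain j where "j \<in> J" by blast
    with \<open>\<forall>j\<in>J. w j = 0\<close> have "\<not> right_independent F w J"
      using not_right_independent_zero[OF F \<open>finite J\<close>] by blast
    with 0 show False by blast
  qed
  then show ?case by simp
next
  case (Suc n)
  obtain i0 where i0: "i0 \<in> I" using Suc.hyps(2) by fastforce
  have I': "n = card (I - {i0})" "finite (I - {i0})" using Suc.hyps(2) Suc.prems(1) i0 by auto
  from Suc.prems(3) obtain C where C: "\<forall>j\<in>J. (\<forall>i\<in>I. C j i \<in> F) \<and> w j = (\<Sum>i\<in>I. v i * C j i)"
    unfolding right_span_def by metis
  show ?case
  proof (cases "\<forall>j\<in>J. C j i0 = 0")
    case True
    have "\<forall>j\<in>J. right_span F v (I - {i0}) (w j)"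
      using C True Suc.prems(1) i0 unfolding right_span_def by (auto simp: sum.remove)
    from Suc.hyps(1)[OF I' Suc.prems(2) this Suc.prems(4)] I'(1) have "card J \<le> n" by simp
    then show ?thesis using Suc.hyps(2) by simp
  next
    case False
    then obtain j0 where j0: "j0 \<in> J" "C j0 i0 \<noteq> 0" by blast
    define t where "t j = inverse (C j0 i0) * C j i0" for j
    have "\<forall>j\<in>J - {j0}. right_span F v (I - {i0}) (w j - w j0 * t j)"
      using right_span_eliminate[OF F Suc.prems(1) i0] C j0 by (simp add: t_def)
    moreover have "\<forall>j\<in>J. t j \<in> F"
      using F C j0 i0 by (simp add: t_def skew_subfield_def)
    then have "right_independent F (\<lambda>j. w j - w j0 * t j) (J - {j0})"
      using right_independent_eliminate[OF F Suc.prems(2) j0(1)] Suc.prems(4) by blast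
    ultimately have "card (J - {j0}) \<le> n"
      using Suc.hyps(1)[OF I'] Suc.prems(2) I'(1) by simp
    then show ?thesis using Suc.hyps(2) Suc.prems(2) j0(1) by (simp add: card_Diff_singleton)
  qed
qed

lemma right_independent_insert_image:
  assumes F: "skew_subfield F" and L: "additive L" "inj L"
    and lin: "\<And>x d. d \<in> F \<Longrightarrow> L (x * d) = L x * d"
    and E: "finite E" "right_independent F (\<lambda>x. x) E" and y: "y \<notin> range L"
  shows "right_independent F (\<lambda>x. x) (insert y (L ` E))"
  unfolding right_independent_def
proof (intro allI impI)
  fix c assume c: "(\<forall>j\<in>insert y (L ` E). c j \<in> F) \<and> (\<Sum>j\<in>insert y (L ` E). j * c j) = 0"
  define u where "u = (\<Sum>e\<in>E. e * c (L e))"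
  have "(\<Sum>j\<in>L ` E. j * c j) = (\<Sum>e\<in>E. L e * c (L e))"
    using L(2) by (simp add: sum.reindex inj_on_subset)
  also have "\<dots> = L u"
    using c by (simp add: u_def additive.sum[OF L(1)] lin)
  moreover have "y \<notin> L ` E" using y by blast
  ultimately have eq: "y * c y + L u = 0"
    using c E(1) by simp
  have "c y = 0"
  proof (rule ccontr)
    assume cy: "c y \<noteq> 0"
    have "(y * c y + L u) * inverse (c y) = 0" using eq by simp
    then have "y = - (L u * inverse (c y))"
      using cy by (simp add: distrib_right mult.assoc eq_neg_iff_add_eq_0)
    also have "\<dots> = L (- u * inverse (c y))"
      using c F cy by (simp add: lin additive.minus[OF L(1)] skew_subfield_def)
    finally have "y = L (- u * inverse (c y))" .
    then show False using y by blast
  qed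
  with eq have "L u = L 0" by (simp add: additive.zero[OF L(1)])
  then have "u = 0" using L(2) by (simp add: inj_eq)
  then have "\<forall>e\<in>E. c (L e) = 0"
    using E(2)[unfolded right_independent_def, rule_format, of "\<lambda>e. c (L e)"] c
    by (simp add: u_def)
  with \<open>c y = 0\<close> show "\<forall>j\<in>insert y (L ` E). c j = 0" by blast
qed

lemma surj_if_inj_right_linear:
  assumes F: "skew_subfield F" and fin: "fin_dim_right_over F"
    and L: "additive L" "inj L" and lin: "\<And>x d. d \<in> F \<Longrightarrow> L (x * d) = L x * d"
  shows "surj L"
proof (rule ccontr)
  assume "\<not> surj L"
  then obtain y where y: "y \<notin> range L" by blast
  obtain B where B: "finite B" "\<forall>x. right_span F (\<lambda>b. b) B x"
    using fin unfolding fin_dim_right_over_def right_span_def by blast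
  define S where "S = {card J | J. finite J \<and> right_independent F (\<lambda>x. x) J}"
  have "S \<subseteq> {..card B}"
    using right_independent_card_le[OF F B(1)] B(2) by (auto simp: S_def)
  then have "finite S" by (rule finite_subset) simp
  moreover have "0 \<in> S"
    unfolding S_def right_independent_def by (intro CollectI exI[of _ "{}"]) simp
  ultimately have "Max S \<in> S" by (intro Max_in) auto
  then obtain E where E: "finite E" "right_independent F (\<lambda>x. x) E" "card E = Max S"
    by (auto simp: S_def)
  have "y \<notin> L ` E" using y by blast
  then have "card (insert y (L ` E)) = Suc (Max S)"
    using E(1,3) card_image[OF inj_on_subset[OF L(2) subset_UNIV]] by simp
  moreover have "card (insert y (L ` E)) \<in> S"
    using right_independent_insert_image[OF F L lin E(1,2) y] E(1) by (auto simp: S_def)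
  ultimately show False using \<open>finite S\<close> by (metis Max_ge Suc_n_not_le_n)
qed

section \<open>Evaluation of skew polynomials through pseudo-linear maps\<close>

lemma additive_funpow: "additive (f :: 'a::ab_group_add \<Rightarrow> 'a) \<Longrightarrow> additive (f ^^ n)"
  by (induction n) (auto simp: additive_def)

lemma additive_injI: "additive f \<Longrightarrow> (\<And>x. f x = 0 \<Longrightarrow> x = 0) \<Longrightarrow> inj f"
  by (rule injI) (metis additive.diff eq_iff_diff_eq_0)

locale ore_extension =
  fixes \<sigma> \<delta> :: "'a::division_ring \<Rightarrow> 'a"
  assumes endo: "ring_endo \<sigma>" and der: "sigma_derivation \<sigma> \<delta>"
begin

sublocale sigma: additive \<sigma>
  using endo by unfold_locales (simp add: ring_endo_def)

sublocale delta: additive \<delta>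
  using der by unfold_locales (simp add: sigma_derivation_def)

lemma sigma_mult: "\<sigma> (x * y) = \<sigma> x * \<sigma> y"
  using endo by (simp add: ring_endo_def)

lemma sigma_one [simp]: "\<sigma> 1 = 1"
  using endo by (simp add: ring_endo_def)

lemma delta_mult: "\<delta> (x * y) = \<sigma> x * \<delta> y + \<delta> x * y"
  using der by (simp add: sigma_derivation_def)

lemmas [simp] = sigma.zero delta.zero

lemma delta_one [simp]: "\<delta> 1 = 0"
  using delta_mult[of 1 1] by simp

text \<open>T_z: left multiplication by T on K[T;\<sigma>,\<delta>]/K[T;\<sigma>,\<delta>](T - z) \<cong> K.\<close>

definition pseudo_lin :: "'a \<Rightarrow> 'a \<Rightarrow> 'a" where
  "pseudo_lin z x = \<sigma> x * z + \<delta> x"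

lemma additive_pseudo_lin: "additive (pseudo_lin z)"
  by unfold_locales (simp add: pseudo_lin_def sigma.add delta.add algebra_simps)

lemma pseudo_lin_mult: "pseudo_lin z (x * y) = \<sigma> x * pseudo_lin z y + \<delta> x * y"
  by (simp add: pseudo_lin_def sigma_mult delta_mult algebra_simps)

lemma pseudo_lin_one [simp]: "pseudo_lin z 1 = z"
  by (simp add: pseudo_lin_def)

definition poly_pseudo_lin :: "'a \<Rightarrow> 'a poly \<Rightarrow> 'a \<Rightarrow> 'a" where
  "poly_pseudo_lin z P x = (\<Sum>k\<le>degree P. coeff P k * (pseudo_lin z ^^ k) x)"

lemma poly_pseudo_lin_bound:
  "degree P \<le> M \<Longrightarrow> poly_pseudo_lin z P x = (\<Sum>k\<le>M. coeff P k * (pseudo_lin z ^^ k) x)"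
  unfolding poly_pseudo_lin_def by (intro sum.mono_neutral_left) (auto simp: coeff_eq_0)

lemma additive_poly_pseudo_lin: "additive (poly_pseudo_lin z P)"
  by unfold_locales
    (simp add: poly_pseudo_lin_def additive.add[OF additive_funpow[OF additive_pseudo_lin]]
      distrib_left sum.distrib)

lemma poly_pseudo_lin_add:
  "poly_pseudo_lin z (A + B) x = poly_pseudo_lin z A x + poly_pseudo_lin z B x"
proof -
  let ?M = "max (degree A) (degree B)"
  show ?thesis
    using poly_pseudo_lin_bound[of "A + B" ?M] poly_pseudo_lin_bound[of A ?M]
      poly_pseudo_lin_bound[of B ?M]
    by (simp add: degree_add_le distrib_right sum.distrib)
qed

lemma additive_poly_pseudo_lin_poly: "additive (\<lambda>P. poly_pseudo_lin z P x)"
  by unfold_locales (rule poly_pseudo_lin_add)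

lemma poly_pseudo_lin_sum:
  "poly_pseudo_lin z (sum f S) x = (\<Sum>s\<in>S. poly_pseudo_lin z (f s) x)"
  using additive.sum[OF additive_poly_pseudo_lin_poly] by simp

lemma poly_pseudo_lin_diff:
  "poly_pseudo_lin z (A - B) x = poly_pseudo_lin z A x - poly_pseudo_lin z B x"
  using additive.diff[OF additive_poly_pseudo_lin_poly] by simp

lemma poly_pseudo_lin_monom: "poly_pseudo_lin z (monom c k) x = c * (pseudo_lin z ^^ k) x"
proof -
  have "poly_pseudo_lin z (monom c k) x = (\<Sum>i\<le>k. coeff (monom c k) i * (pseudo_lin z ^^ i) x)"
    by (rule poly_pseudo_lin_bound[OF degree_monom_le])
  also have "\<dots> = (\<Sum>i\<le>k. if i = k then c * (pseudo_lin z ^^ k) x else 0)"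
    by (rule sum.cong) auto
  finally show ?thesis by simp
qed

lemma poly_pseudo_lin_const: "poly_pseudo_lin z [:r:] x = r * x"
  by (simp add: poly_pseudo_lin_def)

lemma poly_pseudo_lin_Tpow_times:
  "poly_pseudo_lin z (Tpow_times \<sigma> \<delta> n b) x = (pseudo_lin z ^^ n) (b * x)"
proof (induction n)
  case 0
  then show ?case by (simp add: poly_pseudo_lin_const)
next
  case (Suc n)
  define q where "q = Tpow_times \<sigma> \<delta> n b"
  have "poly_pseudo_lin z (Tpow_times \<sigma> \<delta> (Suc n) b) x =
     (\<Sum>k\<le>degree q. \<sigma> (coeff q k) * (pseudo_lin z ^^ Suc k) x + \<delta> (coeff q k) * (pseudo_lin z ^^ k) x)"
    by (simp add: q_def[symmetric] Let_def poly_pseudo_lin_sum poly_pseudo_lin_add poly_pseudo_lin_monom)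
  also have "\<dots> = (\<Sum>k\<le>degree q. pseudo_lin z (coeff q k * (pseudo_lin z ^^ k) x))"
    by (simp add: pseudo_lin_mult)
  also have "\<dots> = pseudo_lin z (poly_pseudo_lin z q x)"
    by (simp add: additive.sum[OF additive_pseudo_lin] poly_pseudo_lin_def)
  finally show ?case using Suc by (simp add: q_def)
qed

lemma Tpow_times_one: "Tpow_times \<sigma> \<delta> n 1 = monom 1 n"
proof (induction n)
  case 0
  then show ?case by (simp add: monom_0)
next
  case (Suc n)
  have "Tpow_times \<sigma> \<delta> (Suc n) 1 =
    (\<Sum>k\<le>n. monom (\<sigma> (coeff (monom 1 n) k)) (Suc k) + monom (\<delta> (coeff (monom 1 n) k)) k)"
    by (simp add: Suc Let_def degree_monom_eq)
  also have "\<dots> = (\<Sum>k\<le>n. if k = n then monom 1 (Suc n) else 0)"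
    by (rule sum.cong) auto
  finally show ?case by simp
qed

lemma degree_Tpow_times: "degree (Tpow_times \<sigma> \<delta> n b) \<le> n"
proof (induction n)
  case 0
  then show ?case by simp
next
  case (Suc n)
  define q where "q = Tpow_times \<sigma> \<delta> n b"
  have "degree (monom (\<sigma> (coeff q k)) (Suc k) + monom (\<delta> (coeff q k)) k) \<le> Suc n"
    if "k \<le> degree q" for k
  proof -
    have "degree (monom (\<sigma> (coeff q k)) (Suc k) + monom (\<delta> (coeff q k)) k) \<le> max (Suc k) k"
      by (intro degree_add_le) (auto intro: le_trans[OF degree_monom_le])
    then show ?thesis using that Suc by (simp add: q_def)
  qed
  then show ?case
    unfolding Tpow_times.simps Let_def q_def[symmetric] by (intro degree_sum_le) auto
qed

lemma mono_mult_one_one: "mono_mult \<sigma> \<delta> c i 1 1 = monom c (Suc i)"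
proof -
  have "mono_mult \<sigma> \<delta> c i 1 1 = (\<Sum>k\<le>i. monom (c * coeff (monom 1 i) k) (k + 1))"
    by (simp add: mono_mult_def Tpow_times_one degree_monom_eq)
  also have "\<dots> = (\<Sum>k\<le>i. if k = i then monom c (Suc i) else 0)"
    by (rule sum.cong) auto
  finally show ?thesis by simp
qed

lemma degree_mono_mult_0: "degree (mono_mult \<sigma> \<delta> c i b 0) \<le> i"
  unfolding mono_mult_def Let_def
proof (rule degree_sum_le)
  fix k assume "k \<in> {..degree (Tpow_times \<sigma> \<delta> i b)}"
  then have "k \<le> i" using degree_Tpow_times[of i b] by simp
  then show "degree (monom (c * coeff (Tpow_times \<sigma> \<delta> i b) k) (k + 0)) \<le> i"
    using degree_monom_le[of "c * coeff (Tpow_times \<sigma> \<delta> i b) k" "k + 0"] by simp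
qed simp

lemma mono_mult_zero_left [simp]: "mono_mult \<sigma> \<delta> 0 i b j = 0"
  by (simp add: mono_mult_def)

lemma mono_mult_add_left:
  "mono_mult \<sigma> \<delta> (c + c') i b j = mono_mult \<sigma> \<delta> c i b j + mono_mult \<sigma> \<delta> c' i b j"
  by (simp add: mono_mult_def Let_def distrib_right add_monom[symmetric] sum.distrib)

lemma poly_pseudo_lin_mono_mult_0:
  "poly_pseudo_lin z (mono_mult \<sigma> \<delta> c i b 0) x = c * (pseudo_lin z ^^ i) (b * x)"
proof -
  let ?T = "Tpow_times \<sigma> \<delta> i b"
  have "poly_pseudo_lin z (mono_mult \<sigma> \<delta> c i b 0) x
      = (\<Sum>k\<le>degree ?T. c * (coeff ?T k * (pseudo_lin z ^^ k) x))"
    by (simp add: mono_mult_def Let_def poly_pseudo_lin_sum poly_pseudo_lin_monom mult.assoc)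
  also have "\<dots> = c * poly_pseudo_lin z ?T x"
    by (simp add: poly_pseudo_lin_def sum_distrib_left)
  finally show ?thesis by (simp add: poly_pseudo_lin_Tpow_times)
qed

definition monom_times_X_minus :: "'a \<Rightarrow> 'a \<Rightarrow> nat \<Rightarrow> 'a poly" where
  "monom_times_X_minus z c i = mono_mult \<sigma> \<delta> c i (- z) 0 + mono_mult \<sigma> \<delta> c i 1 1"

lemma skmult_X_minus:
  assumes "degree Q \<le> M"
  shows "skmult \<sigma> \<delta> Q [:- z, 1:] = (\<Sum>i\<le>M. monom_times_X_minus z (coeff Q i) i)"
proof -
  have "skmult \<sigma> \<delta> Q [:- z, 1:] = (\<Sum>i\<le>degree Q. monom_times_X_minus z (coeff Q i) i)"
    by (simp add: skmult_def monom_times_X_minus_def numeral_eq_Suc atMost_Suc add.commute)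
  also have "\<dots> = (\<Sum>i\<le>M. monom_times_X_minus z (coeff Q i) i)"
    using assms by (intro sum.mono_neutral_left) (auto simp: coeff_eq_0 monom_times_X_minus_def)
  finally show ?thesis .
qed

lemma skmult_X_minus_add:
  "skmult \<sigma> \<delta> (A + B) [:- z, 1:] = skmult \<sigma> \<delta> A [:- z, 1:] + skmult \<sigma> \<delta> B [:- z, 1:]"
proof -
  let ?M = "max (degree A) (degree B)"
  have "monom_times_X_minus z (a + b) i = monom_times_X_minus z a i + monom_times_X_minus z b i"
    for a b i
    by (simp add: monom_times_X_minus_def mono_mult_add_left algebra_simps)
  then show ?thesis
    using skmult_X_minus[of "A + B" ?M] skmult_X_minus[of A ?M] skmult_X_minus[of B ?M]
    by (simp add: degree_add_le sum.distrib)
qed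

lemma skmult_X_minus_monom: "skmult \<sigma> \<delta> (monom p m) [:- z, 1:] = monom_times_X_minus z p m"
proof -
  have "skmult \<sigma> \<delta> (monom p m) [:- z, 1:] = (\<Sum>i\<le>m. monom_times_X_minus z (coeff (monom p m) i) i)"
    by (rule skmult_X_minus[OF degree_monom_le])
  also have "\<dots> = (\<Sum>i\<le>m. if i = m then monom_times_X_minus z p m else 0)"
    by (rule sum.cong) (auto simp: monom_times_X_minus_def mono_mult_def)
  finally show ?thesis by simp
qed

lemma coeff_monom_times_X_minus: "coeff (monom_times_X_minus z p m) (Suc m) = p"
  using degree_mono_mult_0[of p m "- z"]
  unfolding monom_times_X_minus_def mono_mult_one_one by (simp add: coeff_eq_0)

lemma degree_monom_times_X_minus: "degree (monom_times_X_minus z p m) \<le> Suc m"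
  using degree_mono_mult_0[of p m "- z"] degree_monom_le[of p "Suc m"]
  unfolding monom_times_X_minus_def mono_mult_one_one
  by (intro degree_add_le) auto

lemma right_division_X_minus: "\<exists>r Q. P - [:r:] = skmult \<sigma> \<delta> Q [:- z, 1:]"
proof (induction "degree P" arbitrary: P rule: less_induct)
  case less
  show ?case
  proof (cases "degree P")
    case 0
    have "skmult \<sigma> \<delta> 0 [:- z, 1:] = 0"
      using skmult_X_minus[of 0 0 z] by (simp add: monom_times_X_minus_def)
    moreover have "P = [:coeff P 0:]" using degree_0_id[OF 0] by simp
    ultimately have "P - [:coeff P 0:] = skmult \<sigma> \<delta> 0 [:- z, 1:]" by simp
    then show ?thesis by blast
  next
    case (Suc m)
    define p where "p = coeff P (Suc m)"
    define P' where "P' = P - monom_times_X_minus z p m"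
    have "degree P' \<le> Suc m"
      unfolding P'_def using Suc degree_monom_times_X_minus[of z p m] by (intro degree_diff_le) auto
    moreover have "coeff P' (Suc m) = 0" by (simp add: P'_def coeff_monom_times_X_minus p_def)
    ultimately have "degree P' \<noteq> Suc m"
      using leading_coeff_0_iff[of P'] by fastforce
    with \<open>degree P' \<le> Suc m\<close> Suc have "degree P' < degree P" by simp
    then obtain r Q' where "P' - [:r:] = skmult \<sigma> \<delta> Q' [:- z, 1:]" using less by blast
    then have "P - [:r:] = skmult \<sigma> \<delta> (Q' + monom p m) [:- z, 1:]"
      by (simp add: skmult_X_minus_add skmult_X_minus_monom P'_def algebra_simps)
    then show ?thesis by blast
  qed
qed

lemma poly_pseudo_lin_skmult_X_minus: "poly_pseudo_lin z (skmult \<sigma> \<delta> Q [:- z, 1:]) 1 = 0"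
proof -
  have "poly_pseudo_lin z (monom_times_X_minus z c i) 1 = 0" for c i
    unfolding monom_times_X_minus_def mono_mult_one_one
    by (simp add: poly_pseudo_lin_add poly_pseudo_lin_mono_mult_0 poly_pseudo_lin_monom
        funpow_Suc_right additive.minus[OF additive_funpow[OF additive_pseudo_lin]]
        del: funpow.simps)
  then show ?thesis by (simp add: skmult_X_minus[OF order_refl] poly_pseudo_lin_sum)
qed

lemma skeval_eq_poly_pseudo_lin: "skeval \<sigma> \<delta> P z = poly_pseudo_lin z P 1"
  unfolding skeval_def
proof (rule the_equality)
  have unique: "r = poly_pseudo_lin z P 1" if "P - [:r:] = skmult \<sigma> \<delta> Q [:- z, 1:]" for r Q
    using arg_cong[OF that, of "\<lambda>R. poly_pseudo_lin z R 1"]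
    by (simp add: poly_pseudo_lin_diff poly_pseudo_lin_const poly_pseudo_lin_skmult_X_minus)
  with right_division_X_minus show "\<exists>Q. P - [:poly_pseudo_lin z P 1:] = skmult \<sigma> \<delta> Q [:- z, 1:]"
    by metis
  show "\<And>r. \<exists>Q. P - [:r:] = skmult \<sigma> \<delta> Q [:- z, 1:] \<Longrightarrow> r = poly_pseudo_lin z P 1"
    using unique by blast
qed

section \<open>Definedness on a (\<sigma>,\<delta>)-conjugacy class\<close>

lemma sd_act_one: "sd_act \<sigma> \<delta> 1 z = z"
  by (simp add: sd_act_def)

lemma sd_act_mult:
  assumes "b \<noteq> 0" "c \<noteq> 0"
  shows "sd_act \<sigma> \<delta> b (sd_act \<sigma> \<delta> c z) = sd_act \<sigma> \<delta> (b * c) z"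
proof -
  have "sd_act \<sigma> \<delta> (b * c) z = \<sigma> b * \<sigma> c * z * (inverse c * inverse b)
     + (\<sigma> b * \<delta> c + \<delta> b * c) * (inverse c * inverse b)"
    using assms by (simp add: sd_act_def sigma_mult delta_mult nonzero_inverse_mult_distrib)
  also have "\<dots> = \<sigma> b * \<sigma> c * z * inverse c * inverse b + \<sigma> b * \<delta> c * inverse c * inverse b
     + \<delta> b * (c * inverse c) * inverse b"
    by (simp add: algebra_simps)
  also have "\<dots> = sd_act \<sigma> \<delta> b (sd_act \<sigma> \<delta> c z)"
    using assms by (simp add: sd_act_def algebra_simps)
  finally show ?thesis by simp
qed

lemma sd_act_in_conj_class:
  "z \<in> conj_class \<sigma> \<delta> a \<Longrightarrow> b \<noteq> 0 \<Longrightarrow> sd_act \<sigma> \<delta> b z \<in> conj_class \<sigma> \<delta> a"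
  unfolding conj_class_def by (auto simp: sd_act_mult)

lemma self_in_conj_class: "a \<in> conj_class \<sigma> \<delta> a"
  unfolding conj_class_def by (intro CollectI exI[of _ 1]) (simp add: sd_act_one)

lemma pseudo_lin_sd_act:
  assumes "c \<noteq> 0"
  shows "pseudo_lin (sd_act \<sigma> \<delta> c z) x * c = pseudo_lin z (x * c)"
proof -
  have "pseudo_lin (sd_act \<sigma> \<delta> c z) x * c
      = \<sigma> x * \<sigma> c * z * (inverse c * c) + \<sigma> x * \<delta> c * (inverse c * c) + \<delta> x * c"
    by (simp add: pseudo_lin_def sd_act_def algebra_simps)
  also have "\<dots> = pseudo_lin z (x * c)"
    using assms by (simp add: pseudo_lin_def sigma_mult delta_mult algebra_simps)
  finally show ?thesis .
qed

text \<open>T_(^c z) is T_z conjugated by right multiplication with c; this links the values of P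
  on \<Delta>(a) to the single operator P(T_a).\<close>

lemma poly_pseudo_lin_sd_act:
  assumes "c \<noteq> 0"
  shows "poly_pseudo_lin (sd_act \<sigma> \<delta> c z) P x * c = poly_pseudo_lin z P (x * c)"
proof -
  have "(pseudo_lin (sd_act \<sigma> \<delta> c z) ^^ k) x * c = (pseudo_lin z ^^ k) (x * c)" for k x
    by (induction k arbitrary: x) (simp_all add: pseudo_lin_sd_act[OF assms])
  then show ?thesis
    by (simp add: poly_pseudo_lin_def sum_distrib_right mult.assoc)
qed

lemma skeval_sd_act:
  "c \<noteq> 0 \<Longrightarrow> skeval \<sigma> \<delta> P (sd_act \<sigma> \<delta> c z) * c = poly_pseudo_lin z P c"
  using poly_pseudo_lin_sd_act[of c z P 1] by (simp add: skeval_eq_poly_pseudo_lin)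

lemma centralizer_iff: "b \<in> centralizer \<sigma> \<delta> a \<longleftrightarrow> pseudo_lin a b = a * b"
proof (cases "b = 0")
  case False
  have "sd_act \<sigma> \<delta> b a = pseudo_lin a b * inverse b"
    by (simp add: sd_act_def pseudo_lin_def algebra_simps)
  moreover have "x * inverse b = a \<longleftrightarrow> x = a * b" for x
    using False by (auto simp: mult.assoc)
  ultimately show ?thesis using False by (simp add: centralizer_def)
qed (simp add: centralizer_def pseudo_lin_def)

lemma skew_subfield_centralizer: "skew_subfield (centralizer \<sigma> \<delta> a)"
proof -
  let ?C = "centralizer \<sigma> \<delta> a"
  have "x + y \<in> ?C" "- x \<in> ?C" if "x \<in> ?C" "y \<in> ?C" for x y
    using that additive.add[OF additive_pseudo_lin] additive.minus[OF additive_pseudo_lin]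
    by (simp_all add: centralizer_iff distrib_left)
  moreover have "x * y \<in> ?C" if "x \<in> ?C" "y \<in> ?C" for x y
    using that by (auto simp: centralizer_def sd_act_mult[symmetric])
  moreover have "inverse x \<in> ?C" if "x \<in> ?C" for x
    using that sd_act_mult[of "inverse x" x a] by (auto simp: centralizer_def sd_act_one)
  moreover have "0 \<in> ?C" "1 \<in> ?C"
    by (auto simp: centralizer_def sd_act_one)
  ultimately show ?thesis by (simp add: skew_subfield_def)
qed

lemma poly_pseudo_lin_mult_centralizer:
  assumes "d \<in> centralizer \<sigma> \<delta> a"
  shows "poly_pseudo_lin a P (x * d) = poly_pseudo_lin a P x * d"
proof -
  have d: "\<sigma> d * a + \<delta> d = a * d"
    using assms by (simp add: centralizer_iff pseudo_lin_def)
  have "pseudo_lin a (x * d) = pseudo_lin a x * d" for x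
  proof -
    have "pseudo_lin a (x * d) = \<sigma> x * (\<sigma> d * a + \<delta> d) + \<delta> x * d"
      by (simp add: pseudo_lin_def sigma_mult delta_mult algebra_simps)
    also have "\<dots> = pseudo_lin a x * d"
      by (simp only: d) (simp add: pseudo_lin_def algebra_simps)
    finally show ?thesis .
  qed
  then have "(pseudo_lin a ^^ k) (x * d) = (pseudo_lin a ^^ k) x * d" for k x
    by (induction k arbitrary: x) simp_all
  then show ?thesis
    by (simp add: poly_pseudo_lin_def sum_distrib_right mult.assoc)
qed

lemma skew_invertible_on_nonzero: "skew_invertible_on \<sigma> \<delta> Z f \<Longrightarrow> z \<in> Z \<Longrightarrow> f z \<noteq> 0"
  unfolding skew_invertible_on_def skew_prod_def by (metis zero_neq_one)

lemma skew_invertible_onI: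
  assumes closed: "\<And>z b. z \<in> Z \<Longrightarrow> b \<noteq> 0 \<Longrightarrow> sd_act \<sigma> \<delta> b z \<in> Z"
    and nonzero: "\<And>z. z \<in> Z \<Longrightarrow> f z \<noteq> 0"
    and unique: "\<And>z. z \<in> Z \<Longrightarrow> \<exists>!x. x \<noteq> 0 \<and> f (sd_act \<sigma> \<delta> x z) * x = 1"
  shows "skew_invertible_on \<sigma> \<delta> Z f"
proof -
  define g where "g z = (THE x. x \<noteq> 0 \<and> f (sd_act \<sigma> \<delta> x z) * x = 1)" for z
  have g: "g z \<noteq> 0 \<and> f (sd_act \<sigma> \<delta> (g z) z) * g z = 1" if "z \<in> Z" for z
    unfolding g_def using theI'[OF unique[OF that]] .
  show ?thesis
    unfolding skew_invertible_on_def
  proof (intro exI[of _ g] ballI conjI)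
    fix z assume z: "z \<in> Z"
    show "skew_prod \<sigma> \<delta> f g z = 1" using g[OF z] by (simp add: skew_prod_def)
    define u where "u = sd_act \<sigma> \<delta> (f z) z"
    have u: "u \<in> Z" using closed z nonzero by (simp add: u_def)
    have "inverse (f z) \<noteq> 0 \<and> f (sd_act \<sigma> \<delta> (inverse (f z)) u) * inverse (f z) = 1"
      using nonzero[OF z] by (simp add: u_def sd_act_mult sd_act_one)
    then have "g u = inverse (f z)" using g[OF u] unique[OF u] by blast
    then show "skew_prod \<sigma> \<delta> g f z = 1" using nonzero[OF z] by (simp add: skew_prod_def u_def)
  qed
qed

lemma inj_poly_pseudo_lin:
  assumes nonzero: "\<forall>c\<in>conj_class \<sigma> \<delta> a. skeval \<sigma> \<delta> P c \<noteq> 0" and z: "z \<in> conj_class \<sigma> \<delta> a"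
  shows "inj (poly_pseudo_lin z P)"
proof (rule additive_injI[OF additive_poly_pseudo_lin])
  fix x assume x: "poly_pseudo_lin z P x = 0"
  show "x = 0"
  proof (rule ccontr)
    assume "x \<noteq> 0"
    then have "skeval \<sigma> \<delta> P (sd_act \<sigma> \<delta> x z) * x \<noteq> 0"
      using nonzero sd_act_in_conj_class[OF z] by simp
    then show False using skeval_sd_act[OF \<open>x \<noteq> 0\<close>] x by simp
  qed
qed

lemma surj_poly_pseudo_lin:
  assumes fin: "fin_dim_right_over (centralizer \<sigma> \<delta> a)"
    and nonzero: "\<forall>c\<in>conj_class \<sigma> \<delta> a. skeval \<sigma> \<delta> P c \<noteq> 0" and z: "z \<in> conj_class \<sigma> \<delta> a"
  shows "surj (poly_pseudo_lin z P)"
proof -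
  have surj_a: "surj (poly_pseudo_lin a P)"
    using surj_if_inj_right_linear[OF skew_subfield_centralizer fin additive_poly_pseudo_lin
        inj_poly_pseudo_lin[OF nonzero self_in_conj_class]]
      poly_pseudo_lin_mult_centralizer by blast
  obtain e where e: "e \<noteq> 0" "z = sd_act \<sigma> \<delta> e a" using z by (auto simp: conj_class_def)
  have "\<exists>x. poly_pseudo_lin z P x = y" for y
  proof -
    obtain x where x: "poly_pseudo_lin a P x = y * e" using surj_a by (metis surjD)
    have "poly_pseudo_lin z P (x * inverse e) * e = y * e"
      using poly_pseudo_lin_sd_act[OF e(1), of a P "x * inverse e"] e x by (simp add: mult.assoc)
    then show ?thesis using e(1) by (metis mult_cancel_right)
  qed
  then show ?thesis by (metis surjI)
qed

theorem defined_at_iff_nonzero_on_conj_class: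
  assumes fin: "fin_dim_right_over (centralizer \<sigma> \<delta> a)"
  shows "defined_at \<sigma> \<delta> P a \<longleftrightarrow> (\<forall>c\<in>conj_class \<sigma> \<delta> a. skeval \<sigma> \<delta> P c \<noteq> 0)"
proof
  assume "defined_at \<sigma> \<delta> P a"
  then show "\<forall>c\<in>conj_class \<sigma> \<delta> a. skeval \<sigma> \<delta> P c \<noteq> 0"
    unfolding defined_at_def by (auto dest: skew_invertible_on_nonzero)
next
  assume nonzero: "\<forall>c\<in>conj_class \<sigma> \<delta> a. skeval \<sigma> \<delta> P c \<noteq> 0"
  show "defined_at \<sigma> \<delta> P a"
    unfolding defined_at_def
  proof (rule skew_invertible_onI[OF sd_act_in_conj_class])
    fix z assume z: "z \<in> conj_class \<sigma> \<delta> a"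
    show "skeval \<sigma> \<delta> P z \<noteq> 0" using nonzero z by blast
    have inj: "inj (poly_pseudo_lin z P)" by (rule inj_poly_pseudo_lin[OF nonzero z])
    obtain x where x: "poly_pseudo_lin z P x = 1"
      using surj_poly_pseudo_lin[OF fin nonzero z] by (metis surjD)
    then have "x \<noteq> 0" using additive.zero[OF additive_poly_pseudo_lin] by auto
    show "\<exists>!x. x \<noteq> 0 \<and> skeval \<sigma> \<delta> P (sd_act \<sigma> \<delta> x z) * x = 1"
    proof (rule ex1I[of _ x])
      show "x \<noteq> 0 \<and> skeval \<sigma> \<delta> P (sd_act \<sigma> \<delta> x z) * x = 1"
        using \<open>x \<noteq> 0\<close> x by (simp add: skeval_sd_act)
      fix y assume "y \<noteq> 0 \<and> skeval \<sigma> \<delta> P (sd_act \<sigma> \<delta> y z) * y = 1"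
      then have "poly_pseudo_lin z P y = poly_pseudo_lin z P x"
        using x skeval_sd_act[where c = y and z = z and P = P] by simp
      then show "y = x" using inj by (simp add: inj_eq)
    qed
  qed
qed

end

text \<open>Minimality of the representation is irrelevant here: the criterion holds for every
  denominator P.\<close>

theorem proposition3p4:
  fixes \<sigma> \<delta> :: "'a::division_ring \<Rightarrow> 'a" and a :: 'a and P Q :: "'a poly"
  assumes "ring_endo \<sigma>"
    and "sigma_derivation \<sigma> \<delta>"
    and "fin_dim_right_over (centralizer \<sigma> \<delta> a)"
    and "minimal_rep \<sigma> \<delta> P Q"
  shows "defined_at \<sigma> \<delta> P a \<longleftrightarrow> (\<forall>c\<in>conj_class \<sigma> \<delta> a. skeval \<sigma> \<delta> P c \<noteq> 0)"
proof -
  interpret ore_extension \<sigma> \<delta> using assms(1,2) by unfold_locales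
  show ?thesis by (rule defined_at_iff_nonzero_on_conj_class[OF assms(3)])
qed

end
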